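(* For $v\in\mathbb{C}$ and integers $r\geq0$ define \begin{align*} \rho_r(v)&=\delta_{r,0}-\sum_{m=0}^{2r+1}(-1)^m\binom{v}{2r+1-m}\sum_{k=0}^{m}\frac{(2r+2k)!!}{(-1)^k k!}\mathcal{A}_{m,k}\!\left(\tfrac13,\tfrac14,\tfrac15,\dots\right),\\ \gamma_r(v)&=\sum_{m=0}^{2r}(-1)^m\binom{v}{2r-m}\sum_{k=0}^{m}\frac{(2r+2k-1)!!}{(-1)^k k!}\mathcal{A}_{m,k}\!\left(\tfrac13,\tfrac14,\tfrac15,\dots\right),\\ \tilde\rho_r(v)&=-\sum_{m=0}^{2r+1}\frac{v^{2r+1-m}}{(2r+1-m)!}\sum_{k=0}^{m}\frac{(2r+2k)!!}{(-1)^k k!}\mathcal{A}_{m,k}\!\left(\tfrac1{3!},\tfrac1{4!},\tfrac1{5!},\dots\right),\\ \tilde\gamma_r(v)&=\sum_{m=0}^{2r}\frac{v^{2r-m}}{(2r-m)!}\sum_{k=0}^{m}\frac{(2r+2k-1)!!}{(-1)^k k!}\mathcal{A}_{m,k}\!\left(\tfrac1{3!},\tfrac1{4!},\tfrac1{5!},\dots\right). \end{align*} Then $\rho_0(v)=\tilde\rho_0(v)$, $\gamma_0(v)=\tilde\gamma_0(v)$, and for $r\geq1$, \[ \rho_r(v)=\tilde\rho_r(v)+v\,\tilde\rho_{r-1}(v),\qquad \gamma_r(v)=\tilde\gamma_r(v)+v\,\tilde\gamma_{r-1}(v). \]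
   Context: De Moivre polynomial $\mathcal{A}_{n,k}(a_1,a_2,\dots)$: coefficient of $x^n$ in $(a_1x+a_2x^2+\cdots)^k$ (so $\mathcal{A}_{0,0}=1$, $\mathcal{A}_{n,k}=0$ for $n<k$). Double factorial $n!!=n(n-2)\cdots$ down to $1$ or $2$ for $n\geq1$, $0!!=(-1)!!=1$. $\binom{v}{j}=v(v-1)\cdots(v-j+1)/j!$; $\delta_{r,0}$ Kronecker delta. (The $\rho_r(v)$ are the asymptotic expansion coefficients of $\theta_n(v)$ in $\sum_{j=0}^{n+v-1}\frac{n^j}{j!}+\frac{n^{n+v}}{(n+v)!}\theta_n(v)=\frac{e^n}{2}$, and the $\gamma_r(v)$ those of $\Gamma(n+v+1)/(\sqrt{2\pi n}\,n^{n+v}e^{-n})$.) *)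

theory Defs
  imports Complex_Main "HOL-Computational_Algebra.Formal_Power_Series"
begin

text \<open>De Moivre polynomial: coefficient of x^n in (a_1 x + a_2 x^2 + ...)^k,
  where the sequence is given as a function a with a j = a_j for j \<ge> 1 (a 0 is ignored).\<close>
definition deMoivre :: "(nat \<Rightarrow> 'a::comm_ring_1) \<Rightarrow> nat \<Rightarrow> nat \<Rightarrow> 'a" where
  "deMoivre a n k = fps_nth ((Abs_fps (\<lambda>j. if j = 0 then 0 else a j)) ^ k) n"

function dfact :: "int \<Rightarrow> int" where
  "dfact n = (if n \<le> 0 then 1 else n * dfact (n - 2))"
  by auto
termination by (relation "measure (\<lambda>n. nat n)") auto

definition seqA :: "nat \<Rightarrow> complex" where "seqA j = 1 / of_nat (j + 2)"
definition seqB :: "nat \<Rightarrow> complex" where "seqB j = 1 / of_nat (fact (j + 2))"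

definition rho :: "nat \<Rightarrow> complex \<Rightarrow> complex" where
  "rho r v = (if r = 0 then 1 else 0) -
     (\<Sum>m=0..2*r+1. (-1)^m * (v gchoose (2*r+1-m)) *
        (\<Sum>k=0..m. of_int (dfact (2*int r + 2*int k)) / ((-1)^k * fact k) * deMoivre seqA m k))"

definition gam :: "nat \<Rightarrow> complex \<Rightarrow> complex" where
  "gam r v =
     (\<Sum>m=0..2*r. (-1)^m * (v gchoose (2*r-m)) *
        (\<Sum>k=0..m. of_int (dfact (2*int r + 2*int k - 1)) / ((-1)^k * fact k) * deMoivre seqA m k))"

definition rhot :: "nat \<Rightarrow> complex \<Rightarrow> complex" where
  "rhot r v = -
     (\<Sum>m=0..2*r+1. v^(2*r+1-m) / fact (2*r+1-m) *
        (\<Sum>k=0..m. of_int (dfact (2*int r + 2*int k)) / ((-1)^k * fact k) * deMoivre seqB m k))"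

definition gamt :: "nat \<Rightarrow> complex \<Rightarrow> complex" where
  "gamt r v =
     (\<Sum>m=0..2*r. v^(2*r-m) / fact (2*r-m) *
        (\<Sum>k=0..m. of_int (dfact (2*int r + 2*int k - 1)) / ((-1)^k * fact k) * deMoivre seqB m k))"

end

theory Submission
  imports Defs
begin

unbundle fps_syntax

(* With N = 2r+2 for rho and N = 2r+1 for gamma, each inner sum is (N-2)!! times a coefficient
   of (1 + 2 S)^(-N/2), S the generating series of the De Moivre arguments. After absorbing
   the signs (-1)^m, 1 + 2 S becomes 1 + log_tail = 2 (x - log(1+x)) / x^2 for rho and gamma and
   1 + exp_tail = 2 (e^t - 1 - t) / t^2 for their tilde versions. Hence rho and gamma are
   coefficients [x^(N-1)] of (1+x)^v (1 + log_tail)^(-N/2), the tilde versions coefficients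
   [t^(N-1)] of e^(vt) (1 + exp_tail)^(-N/2). The substitution x = e^t - 1 preserves residues,
   and ((e^t - 1)/t)^2 (1 + log_tail(e^t - 1)) = 1 + exp_tail(t); so it turns the former into
   [t^(N-1)] e^((v+1)t) (1 + exp_tail)^(-N/2). With K = (1 + exp_tail)^(-1/2) and
   psi N v = [t^(N-1)] e^(vt) K^N, both claims reduce to
   (N-2) (psi N (v+1) - psi N v) = v psi (N-2) v, a consequence of 2 t K' = 2K - 2K^3 - tK. *)

lemma fps_compose_mult_nth:
  fixes F X G :: "'a::comm_ring_1 fps"
  assumes "X $ 0 = 0"
  shows "((F oo X) * G) $ n = (\<Sum>i=0..n. F $ i * (X ^ i * G) $ n)"
proof -
  have "((F oo X) * G) $ n = (\<Sum>j=0..n. (\<Sum>i=0..n. F $ i * X ^ i $ j) * G $ (n - j))"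
    unfolding fps_mult_nth
  proof (rule sum.cong[OF refl])
    fix j assume "j \<in> {0..n}"
    then have "(\<Sum>i=0..n. F $ i * X ^ i $ j) = (\<Sum>i=0..j. F $ i * X ^ i $ j)"
      by (intro sum.mono_neutral_right) (auto simp: startsby_zero_power_prefix[OF assms])
    then show "(F oo X) $ j * G $ (n - j) = (\<Sum>i=0..n. F $ i * X ^ i $ j) * G $ (n - j)"
      by (simp add: fps_compose_nth)
  qed
  also have "\<dots> = (\<Sum>j=0..n. \<Sum>i=0..n. F $ i * (X ^ i $ j * G $ (n - j)))"
    by (simp add: sum_distrib_right mult.assoc)
  also have "\<dots> = (\<Sum>i=0..n. F $ i * (X ^ i * G) $ n)"
    by (subst sum.swap) (simp add: fps_mult_nth sum_distrib_left)
  finally show ?thesis .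
qed

lemma fps_residue_deriv_mult_inverse_power:
  fixes Y :: "'a::field_char_0 fps"
  assumes Y0: "Y $ 0 \<noteq> 0" and m: "m \<ge> 1"
  shows "(fps_deriv (fps_X * Y) * inverse Y ^ m) $ (m - 1) = (if m = 1 then 1 else 0)"
proof (cases "m = 1")
  case True
  then show ?thesis using Y0 by (simp add: fps_inverse_def)
next
  case False
  define X W where "X = fps_X * Y" and "W = inverse Y"
  have WY: "W * Y = 1" unfolding W_def using Y0 by (rule inverse_mult_eq_1)
  have "fps_deriv W * Y + W * fps_deriv Y = 0"
    using arg_cong[OF WY, of fps_deriv] by (simp add: algebra_simps)
  then have dW: "fps_deriv W * Y = - W * fps_deriv Y" by (simp add: add_eq_0_iff)
  have X_mult_deriv_W: "fps_X * fps_deriv W = W - fps_deriv X * W^2"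
  proof -
    have "fps_X * fps_deriv W = fps_X * fps_deriv W * (W * Y)" using WY by simp
    also have "\<dots> = W * fps_X * (fps_deriv W * Y)" by (simp add: algebra_simps)
    also have "\<dots> = - W * W * (fps_X * fps_deriv Y)" unfolding dW by (simp add: algebra_simps)
    also have "\<dots> = W * (W * Y) - fps_deriv X * W^2"
      by (simp add: X_def algebra_simps power2_eq_square)
    finally show ?thesis using WY by simp
  qed
  \<comment> \<open>With V = W^(m-1): t V' = (m-1) (V - X' W^m); comparing coefficients of t^(m-1)
    leaves (m-1) (X' W^m)_(m-1) = 0.\<close>
  define k where "k = m - 2"
  have k: "m = k + 2" using m False unfolding k_def by linarith
  define V where "V = W ^ (k + 1)"
  have "fps_deriv V = fps_const (of_nat (k + 1)) * fps_deriv W * W ^ k"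
    unfolding V_def by (subst fps_deriv_power) simp
  then have "fps_X * fps_deriv V = fps_const (of_nat (k + 1)) * W ^ k * (fps_X * fps_deriv W)"
    by (simp only: mult_ac)
  also have "\<dots> = fps_const (of_nat (k + 1)) * (W ^ k * W - fps_deriv X * (W ^ k * W^2))"
    unfolding X_mult_deriv_W by (simp only: right_diff_distrib mult_ac)
  also have "\<dots> = fps_const (of_nat (k + 1)) * (V - fps_deriv X * W ^ m)"
    unfolding V_def k by (simp only: power_add[symmetric] power_Suc2[symmetric] Suc_eq_plus1)
  finally have "(fps_X * fps_deriv V) $ (k + 1)
      = of_nat (k + 1) * (V $ (k + 1) - (fps_deriv X * W ^ m) $ (k + 1))"
    by (simp only: fps_mult_left_const_nth fps_sub_nth)
  then have "of_nat (k + 1) * (fps_deriv X * W ^ m) $ (k + 1) = (0::'a)"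
    by (simp add: algebra_simps)
  then show ?thesis using k False by (simp add: X_def W_def del: of_nat_Suc)
qed

(* [x^(N-1)] F = res F(x)/x^N, and residues are invariant under x = X(t) = t Y(t). *)
lemma fps_compose_change_of_variables:
  fixes F Y :: "'a::field_char_0 fps"
  assumes Y0: "Y $ 0 \<noteq> 0" and N: "N \<ge> 1"
  shows "((F oo (fps_X * Y)) * fps_deriv (fps_X * Y) * inverse Y ^ N) $ (N - 1) = F $ (N - 1)"
proof -
  define X D W where "X = fps_X * Y" and "D = fps_deriv X" and "W = inverse Y"
  have WY: "W * Y = 1" unfolding W_def using Y0 by (rule inverse_mult_eq_1)
  have X_power: "(X ^ i * (D * W ^ N)) $ (N - 1) = (if i = N - 1 then 1 else 0)"
    if i: "i \<le> N - 1" for i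
  proof -
    have "X ^ i * (D * W ^ N) = fps_X ^ i * ((Y * W) ^ i * (D * W ^ (N - i)))"
      using i N by (simp add: X_def power_mult_distrib mult_ac power_add[symmetric])
    also have "\<dots> = fps_X ^ i * (D * W ^ (N - i))" using WY by (simp add: mult.commute)
    finally have "(X ^ i * (D * W ^ N)) $ (N - 1) = (D * W ^ (N - i)) $ (N - 1 - i)"
      using i by (simp only: fps_X_power_mult_nth) simp
    also have "N - 1 - i = N - i - 1" by simp
    also have "(D * W ^ (N - i)) $ (N - i - 1) = (if N - i = 1 then 1 else 0)"
      unfolding D_def X_def W_def
      by (rule fps_residue_deriv_mult_inverse_power[OF Y0]) (use i N in simp)
    finally show ?thesis using i N by auto
  qed
  have "((F oo X) * D * W ^ N) $ (N - 1)
      = (\<Sum>i=0..N-1. F $ i * (X ^ i * (D * W ^ N)) $ (N - 1))"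
    unfolding mult.assoc by (rule fps_compose_mult_nth) (simp add: X_def)
  also have "\<dots> = (\<Sum>i=0..N-1. if i = N - 1 then F $ i else 0)"
  proof (rule sum.cong[OF refl])
    fix i assume "i \<in> {0..N-1}"
    then show "F $ i * (X ^ i * (D * W ^ N)) $ (N - 1) = (if i = N - 1 then F $ i else 0)"
      using X_power[of i] by simp
  qed
  also have "\<dots> = F $ (N - 1)" by simp
  finally show ?thesis unfolding X_def D_def W_def .
qed

definition fps_pow1p :: "'a::field_char_0 \<Rightarrow> 'a fps \<Rightarrow> 'a fps" where
  "fps_pow1p a Z = fps_binomial a oo Z"

lemma fps_pow1p_nth: "fps_pow1p a Z $ m = (\<Sum>k=0..m. (a gchoose k) * (Z ^ k) $ m)"
  unfolding fps_pow1p_def by (simp add: fps_compose_nth)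

lemma fps_pow1p_nth_0 [simp]: "fps_pow1p a Z $ 0 = 1"
  by (simp add: fps_pow1p_def)

lemma fps_pow1p_0 [simp]: "fps_pow1p 0 Z = 1"
  by (simp add: fps_pow1p_def)

lemma fps_pow1p_1: "Z $ 0 = 0 \<Longrightarrow> fps_pow1p 1 Z = 1 + Z"
  by (simp add: fps_pow1p_def fps_binomial_1 fps_compose_add_distrib)

lemma fps_pow1p_add: "Z $ 0 = 0 \<Longrightarrow> fps_pow1p (a + b) Z = fps_pow1p a Z * fps_pow1p b Z"
  by (simp add: fps_pow1p_def fps_binomial_add_mult fps_compose_mult_distrib)

lemma fps_pow1p_power: "Z $ 0 = 0 \<Longrightarrow> fps_pow1p a Z ^ n = fps_pow1p (of_nat n * a) Z"
  by (induction n) (simp_all add: fps_pow1p_add[symmetric] algebra_simps)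

lemma fps_pow1p_minus_one_mult: "Z $ 0 = 0 \<Longrightarrow> fps_pow1p (-1) Z * (1 + Z) = 1"
  using fps_pow1p_add[of Z "-1" 1] by (simp add: fps_pow1p_1)

lemma fps_pow1p_compose:
  "Z $ 0 = 0 \<Longrightarrow> X $ 0 = 0 \<Longrightarrow> fps_pow1p a Z oo X = fps_pow1p a (Z oo X)"
  by (simp add: fps_pow1p_def fps_compose_assoc)

lemma fps_square_eq_imp_eq:
  fixes f g :: "'a::field_char_0 fps"
  assumes "f ^ 2 = g ^ 2" "f $ 0 = g $ 0" "f $ 0 \<noteq> 0"
  shows "f = g"
proof -
  have "(f - g) * (f + g) = 0" using assms(1) by (simp add: algebra_simps power2_eq_square)
  moreover have "f + g \<noteq> 0"
  proof
    assume "f + g = 0"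
    then have "(f + g) $ 0 = 0" by simp
    with assms(2,3) show False by simp
  qed
  ultimately show ?thesis by simp
qed

declare dfact.simps [simp del]

lemma dfact_pos: "n > 0 \<Longrightarrow> dfact n = n * dfact (n - 2)"
  by (subst dfact.simps) simp

lemma dfact_nonpos: "n \<le> 0 \<Longrightarrow> dfact n = 1"
  by (subst dfact.simps) simp

lemma dfact_add_even_eq_pochhammer:
  assumes "N \<ge> 1"
  shows "(of_int (dfact (int N - 2 + 2 * int k)) :: 'a::field_char_0)
       = of_int (dfact (int N - 2)) * 2 ^ k * pochhammer (of_nat N / 2) k"
proof (induction k)
  case (Suc k)
  have "dfact (int N - 2 + 2 * int (Suc k)) = (int N + 2 * int k) * dfact (int N - 2 + 2 * int k)"
    using assms by (subst dfact_pos) (simp_all add: algebra_simps)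
  then have "(of_int (dfact (int N - 2 + 2 * int (Suc k))) :: 'a)
      = (of_nat N + 2 * of_nat k) * of_int (dfact (int N - 2 + 2 * int k))"
    by simp
  also have "\<dots> = of_int (dfact (int N - 2)) * 2 ^ Suc k
      * (pochhammer (of_nat N / 2) k * (of_nat N / 2 + of_nat k))"
    unfolding Suc.IH by (simp add: field_simps)
  finally show ?case by (simp add: pochhammer_Suc)
qed simp

lemma dfact_add_even_div_eq_gchoose:
  assumes "N \<ge> 1"
  shows "(of_int (dfact (int N - 2 + 2 * int k)) :: 'a::field_char_0) / ((-1) ^ k * fact k)
       = of_int (dfact (int N - 2)) * ((- of_nat N / 2) gchoose k) * 2 ^ k"
  unfolding dfact_add_even_eq_pochhammer[OF assms] gbinomial_pochhammer
  by (cases "even k") simp_all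

definition deMoivre_series :: "(nat \<Rightarrow> 'a::comm_ring_1) \<Rightarrow> 'a fps" where
  "deMoivre_series a = Abs_fps (\<lambda>j. if j = 0 then 0 else a j)"

lemma deMoivre_eq_power_nth: "deMoivre a m k = (deMoivre_series a ^ k) $ m"
  by (simp add: deMoivre_def deMoivre_series_def)

lemma deMoivre_scale:
  fixes a :: "nat \<Rightarrow> 'a::idom"
  shows "deMoivre (\<lambda>j. s ^ j * a j) m k = s ^ m * deMoivre a m k"
proof -
  have "deMoivre_series (\<lambda>j. s ^ j * a j) = deMoivre_series a oo (fps_const s * fps_X)"
    by (simp add: fps_compose_linear deMoivre_series_def fps_eq_iff)
  then have "deMoivre_series (\<lambda>j. s ^ j * a j) ^ k = deMoivre_series a ^ k oo (fps_const s * fps_X)"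
    by (simp add: fps_compose_power)
  then show ?thesis
    by (simp add: deMoivre_eq_power_nth fps_compose_linear)
qed

lemma deMoivre_dfact_sum_eq_pow1p_nth:
  fixes a :: "nat \<Rightarrow> 'a::field_char_0"
  assumes "N \<ge> 1"
  shows "(\<Sum>k=0..m. of_int (dfact (int N - 2 + 2 * int k)) / ((-1) ^ k * fact k) * deMoivre a m k)
       = of_int (dfact (int N - 2)) * fps_pow1p (- of_nat N / 2) (2 * deMoivre_series a) $ m"
proof -
  have "(2 * deMoivre_series a) ^ k $ m = 2 ^ k * deMoivre a m k" for k
    by (simp add: deMoivre_eq_power_nth power_mult_distrib numeral_fps_const)
  then show ?thesis
    unfolding dfact_add_even_div_eq_gchoose[OF assms]
    by (simp add: fps_pow1p_nth sum_distrib_left mult_ac)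
qed

lemma fps_binomial_compose_expm1:
  "fps_binomial v oo (fps_exp 1 - 1) = fps_exp (v :: 'a::field_char_0)"
proof -
  define X :: "'a fps" where "X = fps_exp 1 - 1"
  define f where "f = fps_binomial v oo X"
  have X0: "X $ 0 = 0" by (simp add: X_def)
  have "fps_deriv f = (fps_deriv (fps_binomial v) oo X) * ((1 + fps_X) oo X)"
    by (simp add: f_def X_def fps_compose_deriv fps_compose_add_distrib)
  also have "\<dots> = (fps_deriv (fps_binomial v) * (1 + fps_X)) oo X"
    by (simp add: fps_compose_mult_distrib[OF X0])
  also have "\<dots> = fps_const v * f"
    by (simp add: f_def fps_binomial_deriv fps_compose_mult_distrib[OF X0])
  finally have "f = fps_const (f $ 0) * fps_exp v" by (simp add: fps_exp_unique_ODE)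
  then show ?thesis by (simp add: f_def X_def)
qed

lemma fps_ln_compose_expm1: "fps_ln 1 oo (fps_exp 1 - 1) = (fps_X :: 'a::field_char_0 fps)"
  by (simp add: fps_ln_fps_exp_inv fps_inv_fps_exp_compose)

definition expm1_quot :: "complex fps" where
  "expm1_quot = Abs_fps (\<lambda>n. 1 / fact (n + 1))"

lemma expm1_quot_nth_0 [simp]: "expm1_quot $ 0 = 1"
  by (simp add: expm1_quot_def)

lemma fps_X_mult_expm1_quot: "fps_X * expm1_quot = fps_exp 1 - 1"
proof (rule fps_ext)
  fix n show "(fps_X * expm1_quot) $ n = (fps_exp 1 - 1) $ n"
    by (cases n) (simp_all add: expm1_quot_def algebra_simps)
qed

definition log_tail :: "complex fps" where
  "log_tail = 2 * deMoivre_series (\<lambda>j. (-1) ^ j * seqA j)"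

definition exp_tail :: "complex fps" where
  "exp_tail = 2 * deMoivre_series seqB"

lemma log_tail_nth: "log_tail $ j = (if j = 0 then 0 else 2 * (-1) ^ j / of_nat (j + 2))"
  by (simp add: log_tail_def deMoivre_series_def seqA_def numeral_fps_const)

lemma exp_tail_nth: "exp_tail $ j = (if j = 0 then 0 else 2 / fact (j + 2))"
  by (simp add: exp_tail_def deMoivre_series_def seqB_def numeral_fps_const algebra_simps)

lemma log_tail_nth_0 [simp]: "log_tail $ 0 = 0"
  by (simp add: log_tail_nth)

lemma exp_tail_nth_0 [simp]: "exp_tail $ 0 = 0"
  by (simp add: exp_tail_nth)

lemma log_tail_closed_form: "fps_X ^ 2 * (1 + log_tail) = 2 * (fps_X - fps_ln 1)"
proof (rule fps_ext)
  fix n :: nat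
  consider "n = 0" | "n = 1" | "n = 2" | "n \<ge> 3" by linarith
  then show "(fps_X ^ 2 * (1 + log_tail)) $ n = (2 * (fps_X - fps_ln 1)) $ n"
  proof cases
    case 4
    have "(fps_X ^ 2 * (1 + log_tail)) $ n = 2 * (-1) ^ (n - 2) / of_nat n"
      using 4 by (simp add: fps_X_power_mult_nth log_tail_nth)
    moreover have "n - 1 = Suc (n - 2)" using 4 by simp
    ultimately show ?thesis
      using 4 by (simp add: fps_ln_nth numeral_fps_const)
  qed (simp_all add: fps_X_power_mult_nth fps_ln_nth numeral_fps_const)
qed

lemma exp_tail_closed_form: "fps_X ^ 2 * (1 + exp_tail) = 2 * (fps_exp 1 - 1 - fps_X)"
proof (rule fps_ext)
  fix n :: nat
  consider "n = 0" | "n = 1" | "n = 2" | "n \<ge> 3" by linarith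
  then show "(fps_X ^ 2 * (1 + exp_tail)) $ n = (2 * (fps_exp 1 - 1 - fps_X)) $ n"
  proof cases
    case 4
    then have "(fps_X ^ 2 * (1 + exp_tail)) $ n = exp_tail $ (n - 2)"
      by (simp add: fps_X_power_mult_nth)
    also have "\<dots> = 2 / fact (n - 2 + 2)"
      using 4 by (simp add: exp_tail_nth)
    also have "n - 2 + 2 = n" using 4 by simp
    finally show ?thesis
      using 4 by (simp add: numeral_fps_const)
  qed (simp_all add: fps_X_power_mult_nth numeral_fps_const)
qed

lemma log_tail_compose_expm1:
  "expm1_quot ^ 2 * (1 + (log_tail oo (fps_exp 1 - 1))) = 1 + exp_tail"
proof -
  define X :: "complex fps" where "X = fps_exp 1 - 1"
  have X0: "X $ 0 = 0" by (simp add: X_def)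
  have "X ^ 2 * (1 + (log_tail oo X)) = (fps_X ^ 2 * (1 + log_tail)) oo X"
    using X0 by (simp add: fps_compose_mult_distrib fps_compose_add_distrib fps_compose_power[symmetric])
  also have "\<dots> = 2 * (X - fps_X)"
    unfolding log_tail_closed_form using X0
    by (simp add: fps_compose_mult_distrib fps_compose_sub_distrib X_def fps_ln_compose_expm1)
  also have "\<dots> = fps_X ^ 2 * (1 + exp_tail)"
    by (simp add: exp_tail_closed_form X_def)
  finally have "fps_X ^ 2 * (expm1_quot ^ 2 * (1 + (log_tail oo X))) = fps_X ^ 2 * (1 + exp_tail)"
    by (simp add: X_def fps_X_mult_expm1_quot[symmetric] power_mult_distrib mult.assoc)
  then show ?thesis by (simp add: X_def)
qed

lemma fps_pow1p_log_tail_compose_expm1: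
  "fps_pow1p (- of_nat N / 2) log_tail oo (fps_exp 1 - 1)
     = expm1_quot ^ N * fps_pow1p (- of_nat N / 2) exp_tail"
proof -
  define C where "C = log_tail oo (fps_exp 1 - 1)"
  have C0: "C $ 0 = 0" by (simp add: C_def)
  define S1 S2 where "S1 = fps_pow1p (-1/2) C" and "S2 = expm1_quot * fps_pow1p (-1/2) exp_tail"
  \<comment> \<open>S1 and S2 are square roots of 1 / (1 + C) with constant term 1.\<close>
  have S1: "S1 ^ 2 * (1 + C) = 1"
    using fps_pow1p_power[OF C0, of "-1/2" 2] fps_pow1p_minus_one_mult[OF C0] by (simp add: S1_def)
  have S2: "S2 ^ 2 * (1 + C) = 1"
  proof -
    have "S2 ^ 2 * (1 + C) = fps_pow1p (-1/2) exp_tail ^ 2 * (expm1_quot ^ 2 * (1 + C))"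
      by (simp add: S2_def power_mult_distrib mult_ac)
    also have "\<dots> = fps_pow1p (-1) exp_tail * (1 + exp_tail)"
      unfolding C_def log_tail_compose_expm1 using fps_pow1p_power[of exp_tail "-1/2" 2] by simp
    finally show ?thesis by (simp add: fps_pow1p_minus_one_mult)
  qed
  have "S1 ^ 2 = S1 ^ 2 * (S2 ^ 2 * (1 + C))" using S2 by simp
  also have "\<dots> = S2 ^ 2 * (S1 ^ 2 * (1 + C))" by (simp only: mult_ac)
  finally have "S1 ^ 2 = S2 ^ 2" using S1 by simp
  then have S12: "S1 = S2"
    by (rule fps_square_eq_imp_eq) (simp_all add: S1_def S2_def)
  have "fps_pow1p (- of_nat N / 2) log_tail oo (fps_exp 1 - 1) = fps_pow1p (- of_nat N / 2) C"
    unfolding C_def by (rule fps_pow1p_compose) simp_all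
  also have "\<dots> = S1 ^ N"
    using fps_pow1p_power[OF C0, of "-1/2" N] by (simp add: S1_def)
  also have "\<dots> = expm1_quot ^ N * fps_pow1p (-1/2) exp_tail ^ N"
    by (simp add: S12 S2_def power_mult_distrib)
  also have "\<dots> = expm1_quot ^ N * fps_pow1p (- of_nat N / 2) exp_tail"
    using fps_pow1p_power[of exp_tail "-1/2" N] by simp
  finally show ?thesis .
qed

lemma binomial_log_tail_coeff_eq_exp_exp_tail_coeff:
  assumes "N \<ge> 1"
  shows "(fps_binomial v * fps_pow1p (- of_nat N / 2) log_tail) $ (N - 1)
       = (fps_exp (v + 1) * fps_pow1p (- of_nat N / 2) exp_tail) $ (N - 1)"
proof -
  let ?F = "fps_binomial v * fps_pow1p (- of_nat N / 2) log_tail"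
  let ?X = "fps_X * expm1_quot"
  have "?F oo ?X = fps_exp v * (expm1_quot ^ N * fps_pow1p (- of_nat N / 2) exp_tail)"
  proof -
    have X0: "(fps_exp 1 - 1 :: complex fps) $ 0 = 0" by simp
    show ?thesis
      unfolding fps_X_mult_expm1_quot fps_compose_mult_distrib[OF X0] fps_binomial_compose_expm1
        fps_pow1p_log_tail_compose_expm1 ..
  qed
  then have "(?F oo ?X) * fps_deriv ?X * inverse expm1_quot ^ N
      = fps_exp v * fps_exp 1 * (expm1_quot * inverse expm1_quot) ^ N
          * fps_pow1p (- of_nat N / 2) exp_tail"
    by (simp add: fps_X_mult_expm1_quot power_mult_distrib mult_ac)
  also have "\<dots> = fps_exp (v + 1) * fps_pow1p (- of_nat N / 2) exp_tail"
    by (simp add: inverse_mult_eq_1' fps_exp_add_mult)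
  finally show ?thesis
    using fps_compose_change_of_variables[of expm1_quot N ?F] assms by simp
qed

definition exp_tail_rsqrt :: "complex fps" where
  "exp_tail_rsqrt = fps_pow1p (-1/2) exp_tail"

lemma fps_pow1p_exp_tail_eq_power: "fps_pow1p (- of_nat N / 2) exp_tail = exp_tail_rsqrt ^ N"
  using fps_pow1p_power[of exp_tail "-1/2" N] by (simp add: exp_tail_rsqrt_def)

lemma exp_tail_rsqrt_nth_0 [simp]: "exp_tail_rsqrt $ 0 = 1"
  by (simp add: exp_tail_rsqrt_def)

lemma exp_tail_rsqrt_square: "exp_tail_rsqrt ^ 2 * (1 + exp_tail) = 1"
  using fps_pow1p_exp_tail_eq_power[of 2] fps_pow1p_minus_one_mult[of exp_tail] by simp

lemma exp_tail_ode: "fps_X * fps_deriv exp_tail = fps_X * (1 + exp_tail) - 2 * exp_tail"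
proof -
  have "fps_deriv (fps_X ^ 2 * (1 + exp_tail)) = fps_deriv (2 * (fps_exp 1 - 1 - fps_X))"
    by (simp only: exp_tail_closed_form)
  then have "2 * fps_X * (1 + exp_tail) + fps_X ^ 2 * fps_deriv exp_tail = 2 * (fps_exp 1 - 1)"
    by (simp add: fps_deriv_power numeral_fps_const algebra_simps)
  also have "\<dots> = fps_X ^ 2 * (1 + exp_tail) + 2 * fps_X"
    by (simp add: exp_tail_closed_form)
  finally have "fps_X * (fps_X * fps_deriv exp_tail)
      = fps_X * (fps_X * (1 + exp_tail) - 2 * exp_tail)"
    by (simp add: algebra_simps power2_eq_square)
  then show ?thesis by simp
qed

lemma exp_tail_rsqrt_ode:
  "2 * (fps_X * fps_deriv exp_tail_rsqrt)
     = 2 * exp_tail_rsqrt - 2 * exp_tail_rsqrt ^ 3 - fps_X * exp_tail_rsqrt"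
proof -
  let ?K = exp_tail_rsqrt and ?B = exp_tail
  have "fps_deriv (?K ^ 2 * (1 + ?B)) = 0" by (simp add: exp_tail_rsqrt_square)
  then have d: "2 * ?K * fps_deriv ?K * (1 + ?B) + ?K ^ 2 * fps_deriv ?B = 0"
    by (simp add: fps_deriv_power power2_eq_square algebra_simps)
  have "0 = fps_X * ?K * (2 * ?K * fps_deriv ?K * (1 + ?B) + ?K ^ 2 * fps_deriv ?B)"
    using d by simp
  also have "\<dots> = 2 * (fps_X * fps_deriv ?K) * (?K ^ 2 * (1 + ?B)) + ?K ^ 3 * (fps_X * fps_deriv ?B)"
    by (simp add: algebra_simps power2_eq_square power3_eq_cube)
  also have "\<dots> = 2 * (fps_X * fps_deriv ?K) + ?K ^ 3 * (fps_X * (1 + ?B) - 2 * ?B)"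
    unfolding exp_tail_rsqrt_square exp_tail_ode by simp
  also have "?K ^ 3 * (fps_X * (1 + ?B) - 2 * ?B)
      = fps_X * ?K * (?K ^ 2 * (1 + ?B)) - 2 * (?K * (?K ^ 2 * (1 + ?B)) - ?K ^ 3)"
    by (simp add: algebra_simps power2_eq_square power3_eq_cube)
  also have "\<dots> = fps_X * ?K - 2 * (?K - ?K ^ 3)"
    unfolding exp_tail_rsqrt_square by simp
  finally have "0 = 2 * (fps_X * fps_deriv ?K) + (fps_X * ?K - 2 * (?K - ?K ^ 3))" .
  then show ?thesis by (simp add: algebra_simps eq_neg_iff_add_eq_0 add_eq_0_iff)
qed

definition psi :: "nat \<Rightarrow> complex \<Rightarrow> complex" where
  "psi N v = (fps_exp v * exp_tail_rsqrt ^ N) $ (N - 1)"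

lemma psi_1: "psi 1 v = 1"
  by (simp add: psi_def)

lemma psi_shift_diff:
  assumes "N \<ge> 2"
  shows "2 * (psi N (v + 1) - psi N v)
       = 2 * (fps_exp v * exp_tail_rsqrt ^ N) $ (N - 2)
         + (fps_X ^ 2 * (fps_exp v * exp_tail_rsqrt ^ (N - 2))) $ (N - 1)"
proof -
  let ?e = "fps_exp v" and ?K = exp_tail_rsqrt
  have KN: "?K ^ N = ?K ^ (N - 2) * ?K ^ 2"
    using assms by (metis le_add_diff_inverse2 power_add)
  have "2 * (fps_exp (v + 1) - ?e) = ?e * (2 * (fps_exp 1 - 1))"
    by (simp add: fps_exp_add_mult algebra_simps)
  also have "2 * (fps_exp 1 - 1) = 2 * fps_X + fps_X ^ 2 * (1 + exp_tail)"
    by (simp add: exp_tail_closed_form)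
  finally have exp_diff:
    "2 * (fps_exp (v + 1) - ?e) = ?e * (2 * fps_X + fps_X ^ 2 * (1 + exp_tail))" .
  have "2 * (fps_exp (v + 1) * ?K ^ N - ?e * ?K ^ N) = 2 * (fps_exp (v + 1) - ?e) * ?K ^ N"
    by (simp add: algebra_simps)
  also have "\<dots> = 2 * (fps_X * (?e * ?K ^ N))
      + fps_X ^ 2 * (?e * ?K ^ (N - 2) * (?K ^ 2 * (1 + exp_tail)))"
    unfolding exp_diff KN by (simp add: algebra_simps)
  also have "\<dots> = fps_const 2 * (fps_X * (?e * ?K ^ N)) + fps_X ^ 2 * (?e * ?K ^ (N - 2))"
    by (simp add: exp_tail_rsqrt_square numeral_fps_const)
  finally have "(fps_const 2 * (fps_exp (v + 1) * ?K ^ N - ?e * ?K ^ N)) $ (N - 1)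
      = (fps_const 2 * (fps_X * (?e * ?K ^ N)) + fps_X ^ 2 * (?e * ?K ^ (N - 2))) $ (N - 1)"
    by (simp add: numeral_fps_const)
  moreover have "(fps_X * (?e * ?K ^ N)) $ (N - 1) = (?e * ?K ^ N) $ (N - 2)"
    using assms by (simp add: numeral_2_eq_2)
  ultimately show ?thesis by (simp add: psi_def)
qed

lemma psi_2_shift: "psi 2 (v + 1) - psi 2 v = 1"
proof -
  have "2 * (psi 2 (v + 1) - psi 2 v) = 2 * 1"
    using psi_shift_diff[of 2 v] by (simp add: fps_X_power_mult_nth fps_power_zeroth)
  then show ?thesis by (metis mult_left_cancel zero_neq_numeral)
qed

(* Coefficients of t^M in t (e^(vt) K^M)', with K' eliminated by the ODE for K. *)
lemma coeff_exp_mult_exp_tail_rsqrt_power_rec: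
  assumes M: "M \<ge> 1"
  shows "2 * of_nat M * (fps_exp v * exp_tail_rsqrt ^ (M + 2)) $ M
       = (2 * v - of_nat M) * (fps_exp v * exp_tail_rsqrt ^ M) $ (M - 1)"
proof -
  let ?e = "fps_exp v" and ?K = exp_tail_rsqrt
  define f g where "f = ?e * ?K ^ M" and "g = ?e * ?K ^ (M + 2)"
  have K_power: "?K ^ (M - 1) * ?K = ?K ^ M" "?K ^ (M - 1) * ?K ^ 3 = ?K ^ (M + 2)"
    using M by (simp_all add: power_Suc2[symmetric] power_add[symmetric])
  have "2 * (fps_X * fps_deriv f)
      = 2 * fps_const v * (fps_X * f)
        + fps_const (of_nat M) * ?e * ?K ^ (M - 1) * (2 * (fps_X * fps_deriv ?K))"
    unfolding f_def by (simp add: fps_deriv_power algebra_simps)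
  also have "\<dots> = 2 * fps_const v * (fps_X * f)
        + fps_const (of_nat M) * ?e * (2 * (?K ^ (M - 1) * ?K) - 2 * (?K ^ (M - 1) * ?K ^ 3)
            - fps_X * (?K ^ (M - 1) * ?K))"
    unfolding exp_tail_rsqrt_ode by (simp add: algebra_simps)
  also have "\<dots> = 2 * fps_const v * (fps_X * f) + fps_const (of_nat M) * (2 * f - 2 * g - fps_X * f)"
    unfolding K_power f_def g_def by (simp add: algebra_simps)
  finally have eq: "2 * (fps_X * fps_deriv f)
      = 2 * fps_const v * (fps_X * f) + fps_const (of_nat M) * (2 * f - 2 * g - fps_X * f)" .
  have "(2 * (fps_X * fps_deriv f)) $ M = 2 * (of_nat M * f $ M)"
    using M by (cases M) (simp_all add: numeral_fps_const)
  moreover have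
    "(2 * fps_const v * (fps_X * f) + fps_const (of_nat M) * (2 * f - 2 * g - fps_X * f)) $ M
      = 2 * v * f $ (M - 1) + of_nat M * (2 * f $ M - 2 * g $ M - f $ (M - 1))"
    using M by (cases M) (simp_all add: numeral_fps_const)
  ultimately have "2 * (of_nat M * f $ M)
      = 2 * v * f $ (M - 1) + of_nat M * (2 * f $ M - 2 * g $ M - f $ (M - 1))"
    using eq by simp
  then show ?thesis unfolding f_def g_def by (simp add: algebra_simps)
qed

lemma psi_shift_recurrence:
  assumes "N \<ge> 3"
  shows "of_nat (N - 2) * (psi N (v + 1) - psi N v) = v * psi (N - 2) v"
proof -
  define M where "M = N - 2"
  have M: "M \<ge> 1" "N = M + 2" using assms by (auto simp: M_def)
  have diff: "2 * (psi N (v + 1) - psi N v)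
      = 2 * (fps_exp v * exp_tail_rsqrt ^ N) $ M + psi M v"
    using psi_shift_diff[of N v] M by (simp add: psi_def fps_X_power_mult_nth)
  have "2 * (of_nat M * (psi N (v + 1) - psi N v))
      = 2 * of_nat M * (fps_exp v * exp_tail_rsqrt ^ N) $ M + of_nat M * psi M v"
    by (simp only: diff mult.left_commute[of 2] distrib_left mult.assoc)
  also have "\<dots> = 2 * (v * psi M v)"
    using coeff_exp_mult_exp_tail_rsqrt_power_rec[OF M(1), of v] M
    by (simp add: psi_def algebra_simps)
  finally show ?thesis by (simp add: M_def)
qed

lemma convolution_dfact_deMoivre_sum:
  fixes F :: "'a::field_char_0 fps"
  assumes "N \<ge> 1"
  shows "(\<Sum>m=0..N-1. F $ (N - 1 - m) * s ^ m *
            (\<Sum>k=0..m. of_int (dfact (int N - 2 + 2 * int k)) / ((-1) ^ k * fact k) * deMoivre a m k))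
       = of_int (dfact (int N - 2))
         * (F * fps_pow1p (- of_nat N / 2) (2 * deMoivre_series (\<lambda>j. s ^ j * a j))) $ (N - 1)"
proof -
  let ?c = "\<lambda>k. of_int (dfact (int N - 2 + 2 * int k)) / ((-1) ^ k * fact k) :: 'a"
  let ?P = "fps_pow1p (- of_nat N / 2) (2 * deMoivre_series (\<lambda>j. s ^ j * a j))"
  let ?D = "of_int (dfact (int N - 2)) :: 'a"
  have inner: "s ^ m * (\<Sum>k=0..m. ?c k * deMoivre a m k) = ?D * ?P $ m" for m
  proof -
    have "s ^ m * (\<Sum>k=0..m. ?c k * deMoivre a m k)
        = (\<Sum>k=0..m. ?c k * deMoivre (\<lambda>j. s ^ j * a j) m k)"
      by (simp add: deMoivre_scale sum_distrib_left mult.left_commute)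
    also have "\<dots> = ?D * ?P $ m"
      by (rule deMoivre_dfact_sum_eq_pow1p_nth[OF assms])
    finally show ?thesis .
  qed
  have "(\<Sum>m=0..N-1. F $ (N - 1 - m) * s ^ m * (\<Sum>k=0..m. ?c k * deMoivre a m k))
      = (\<Sum>m=0..N-1. ?D * (?P $ m * F $ (N - 1 - m)))"
  proof (rule sum.cong[OF refl])
    fix m
    show "F $ (N - 1 - m) * s ^ m * (\<Sum>k=0..m. ?c k * deMoivre a m k)
        = ?D * (?P $ m * F $ (N - 1 - m))"
      unfolding mult.assoc inner by (simp only: mult_ac)
  qed
  also have "\<dots> = ?D * (?P * F) $ (N - 1)"
    by (simp only: fps_mult_nth sum_distrib_left)
  finally show ?thesis
    by (simp only: mult.commute[of ?P F])
qed

lemma gchoose_deMoivre_seqA_sum_eq_psi: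
  assumes "N \<ge> 1"
  shows "(\<Sum>m=0..N-1. (-1) ^ m * (v gchoose (N - 1 - m)) *
            (\<Sum>k=0..m. of_int (dfact (int N - 2 + 2 * int k)) / ((-1) ^ k * fact k) * deMoivre seqA m k))
       = of_int (dfact (int N - 2)) * psi N (v + 1)" (is "?S = _")
proof -
  have "?S = of_int (dfact (int N - 2)) * (fps_binomial v * fps_pow1p (- of_nat N / 2) log_tail) $ (N - 1)"
    unfolding log_tail_def convolution_dfact_deMoivre_sum[OF assms, symmetric]
    by (simp only: fps_binomial_nth mult.commute)
  also have "\<dots> = of_int (dfact (int N - 2)) * psi N (v + 1)"
    unfolding binomial_log_tail_coeff_eq_exp_exp_tail_coeff[OF assms] psi_def
      fps_pow1p_exp_tail_eq_power ..
  finally show ?thesis .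
qed

lemma exp_deMoivre_seqB_sum_eq_psi:
  assumes "N \<ge> 1"
  shows "(\<Sum>m=0..N-1. v ^ (N - 1 - m) / fact (N - 1 - m) *
            (\<Sum>k=0..m. of_int (dfact (int N - 2 + 2 * int k)) / ((-1) ^ k * fact k) * deMoivre seqB m k))
       = of_int (dfact (int N - 2)) * psi N v"
  using convolution_dfact_deMoivre_sum[OF assms, of "fps_exp v" 1 seqB]
  unfolding psi_def fps_pow1p_exp_tail_eq_power[symmetric] exp_tail_def
  by (simp only: fps_exp_nth of_nat_fact power_one mult_1_left mult_1_right)

lemma rho_eq_psi:
  "rho r v = (if r = 0 then 1 else 0) - of_int (dfact (2 * int r)) * psi (2 * r + 2) (v + 1)"
  using gchoose_deMoivre_seqA_sum_eq_psi[of "2 * r + 2" v]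
  by (simp add: rho_def algebra_simps)

lemma rhot_eq_psi: "rhot r v = - (of_int (dfact (2 * int r)) * psi (2 * r + 2) v)"
  using exp_deMoivre_seqB_sum_eq_psi[of "2 * r + 2" v]
  by (simp add: rhot_def algebra_simps)

lemma gam_eq_psi: "gam r v = of_int (dfact (2 * int r - 1)) * psi (2 * r + 1) (v + 1)"
  using gchoose_deMoivre_seqA_sum_eq_psi[of "2 * r + 1" v]
  by (simp add: gam_def algebra_simps)

lemma gamt_eq_psi: "gamt r v = of_int (dfact (2 * int r - 1)) * psi (2 * r + 1) v"
  using exp_deMoivre_seqB_sum_eq_psi[of "2 * r + 1" v]
  by (simp add: gamt_def algebra_simps)

lemma rho_Suc: "rho (Suc r) v = rhot (Suc r) v + v * rhot r v"
proof -
  have N: "2 * Suc r + 2 = 2 * r + 4" by simp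
  have rec: "of_nat (2 * r + 2) * (psi (2 * r + 4) (v + 1) - psi (2 * r + 4) v)
      = v * psi (2 * r + 2) v"
    using psi_shift_recurrence[of "2 * r + 4" v] by simp
  have df: "(of_int (dfact (2 * int (Suc r))) :: complex)
      = of_nat (2 * r + 2) * of_int (dfact (2 * int r))"
    by (subst dfact_pos) simp_all
  have "rho (Suc r) v - rhot (Suc r) v
      = - (of_int (dfact (2 * int r))
           * (of_nat (2 * r + 2) * (psi (2 * r + 4) (v + 1) - psi (2 * r + 4) v)))"
    unfolding rho_eq_psi rhot_eq_psi N df by (simp add: algebra_simps)
  also have "\<dots> = v * rhot r v"
    unfolding rec rhot_eq_psi by (simp add: algebra_simps)
  finally show ?thesis by (simp add: algebra_simps)
qed

lemma gam_Suc: "gam (Suc r) v = gamt (Suc r) v + v * gamt r v"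
proof -
  have N: "2 * Suc r + 1 = 2 * r + 3" by simp
  have rec: "of_nat (2 * r + 1) * (psi (2 * r + 3) (v + 1) - psi (2 * r + 3) v)
      = v * psi (2 * r + 1) v"
    using psi_shift_recurrence[of "2 * r + 3" v] by simp
  have df: "(of_int (dfact (2 * int (Suc r) - 1)) :: complex)
      = of_nat (2 * r + 1) * of_int (dfact (2 * int r - 1))"
    by (subst dfact_pos) simp_all
  have "gam (Suc r) v - gamt (Suc r) v
      = of_int (dfact (2 * int r - 1))
        * (of_nat (2 * r + 1) * (psi (2 * r + 3) (v + 1) - psi (2 * r + 3) v))"
    unfolding gam_eq_psi gamt_eq_psi N df by (simp add: algebra_simps)
  also have "\<dots> = v * gamt r v"
    unfolding rec gamt_eq_psi by (simp add: algebra_simps)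
  finally show ?thesis by (simp add: algebra_simps)
qed

theorem proposition6p3:
  fixes v :: complex
  shows "rho 0 v = rhot 0 v \<and> gam 0 v = gamt 0 v \<and>
    (\<forall>r::nat. r \<ge> 1 \<longrightarrow> rho r v = rhot r v + v * rhot (r - 1) v) \<and>
    (\<forall>r::nat. r \<ge> 1 \<longrightarrow> gam r v = gamt r v + v * gamt (r - 1) v)"
proof (intro conjI allI impI)
  show "rho 0 v = rhot 0 v"
    using psi_2_shift[of v]
    by (simp add: rho_eq_psi rhot_eq_psi dfact_nonpos numeral_2_eq_2 algebra_simps)
  show "gam 0 v = gamt 0 v"
    using psi_1[of v] psi_1[of "v + 1"] by (simp add: gam_eq_psi gamt_eq_psi dfact_nonpos)
next
  fix r :: nat
  assume "r \<ge> 1"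
  then obtain s where r: "r = Suc s" using not0_implies_Suc by fastforce
  show "rho r v = rhot r v + v * rhot (r - 1) v" by (simp add: r rho_Suc)
  show "gam r v = gamt r v + v * gamt (r - 1) v" by (simp add: r gam_Suc)
qed

end
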